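(* Let $n\ge1$ and $K\in\mathcal S_n\setminus\{\emptyset,\mathbb R^n\}$. Then \[ \mathrm{Outrad}(K)+\mathrm{Inrad}(K^c)=1. \] Moreover, there is a unique point $x$ with $K\subseteq B(x,\mathrm{Outrad}(K))$, and it is also the unique point with $B(x,\mathrm{Inrad}(K^c))\subseteq K^c$; i.e., the smallest ball containing $K$ and the largest ball contained in $K^c$ are unique, concentric, and $c$-dual to one another.
   Context: $B(x,r)$ is the closed Euclidean ball. For $A\subseteq\mathbb R^n$, $A^c=\bigcap_{x\in A}B(x,1)$. $\mathcal S_n$ is the class of all sets of the form $\bigcap_{x\in A}B(x,1)$, $A\subseteq\mathbb R^n$. $\mathrm{Outrad}(K)=\min\{R:\exists x,\ K\subseteq B(x,R)\}$ and $\mathrm{Inrad}(K)=\max\{r:\exists x,\ B(x,r)\subseteq K\}$. *)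

theory Defs
  imports "HOL-Analysis.Analysis"
begin

text \<open>The c-dual: A^c = intersection of closed unit balls centred at points of A
  (for A = {} this is the whole space).\<close>
definition cdual :: "'a::euclidean_space set \<Rightarrow> 'a set" where
  "cdual A = (\<Inter>x\<in>A. cball x 1)"

definition S_class :: "'a::euclidean_space set set" where
  "S_class = {K. \<exists>A. K = cdual A}"

definition Outrad :: "'a::euclidean_space set \<Rightarrow> real" where
  "Outrad K = Inf {R. \<exists>x. K \<subseteq> cball x R}"

definition Inrad :: "'a::euclidean_space set \<Rightarrow> real" where
  "Inrad K = Sup {r. \<exists>x. cball x r \<subseteq> K}"

end

theory Submission
  imports Defs
begin

text \<open>The circumradius is the minimum of the farthest-distance function
  \<open>y \<mapsto> sup {dist y w | w \<in> K}\<close>, which is 1-Lipschitz and hence attains its minimum on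
  a compact ball.  Two distinct minimal balls are impossible: by Apollonius' identity the
  ball centred at the midpoint of their centres would contain \<open>K\<close> with a strictly smaller
  radius.  Finally, for \<open>r \<ge> 0\<close>, \<open>B(y, r) \<subseteq> K\<^sup>c\<close> holds exactly when \<open>K \<subseteq> B(y, 1 - r)\<close>,
  so the largest ball in \<open>K\<^sup>c\<close> is the minimal ball around \<open>K\<close> with radius \<open>1 - Outrad K\<close>;
  membership of \<open>K\<close> in \<open>S_class\<close> only serves to make \<open>Outrad K \<le> 1\<close>.\<close>

definition farthest_dist :: "'a::metric_space set \<Rightarrow> 'a \<Rightarrow> real" where
  "farthest_dist K y = (SUP w\<in>K. dist y w)"

lemma bdd_above_dist_image:
  fixes K :: "'a::metric_space set"
  assumes "bounded K"
  shows "bdd_above (dist y ` K)"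
  using assms by (auto simp: bounded_any_center[of K y] bdd_above_def)

lemma dist_le_farthest_dist:
  fixes K :: "'a::metric_space set"
  assumes "bounded K" and "w \<in> K"
  shows "dist y w \<le> farthest_dist K y"
  unfolding farthest_dist_def using bdd_above_dist_image[OF assms(1)] assms(2)
  by (rule cSUP_upper2) simp

lemma farthest_dist_le_iff:
  fixes K :: "'a::metric_space set"
  assumes "bounded K" and "K \<noteq> {}"
  shows "farthest_dist K y \<le> R \<longleftrightarrow> K \<subseteq> cball y R"
  unfolding farthest_dist_def using assms bdd_above_dist_image[OF assms(1)]
  by (auto simp: cSUP_le_iff)

lemma lipschitz_on_farthest_dist:
  fixes K :: "'a::metric_space set"
  assumes "bounded K" and "K \<noteq> {}"
  shows "1-lipschitz_on UNIV (farthest_dist K)"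
proof (rule lipschitz_onI)
  have shift: "farthest_dist K y \<le> farthest_dist K z + dist y z" for y z
    unfolding farthest_dist_le_iff[OF assms]
  proof
    fix w assume "w \<in> K"
    then have "dist z w \<le> farthest_dist K z"
      by (rule dist_le_farthest_dist[OF assms(1)])
    then show "w \<in> cball y (farthest_dist K z + dist y z)"
      using dist_triangle[of y w z] by simp
  qed
  show "dist (farthest_dist K y) (farthest_dist K z) \<le> 1 * dist y z" for y z
    using shift[of y z] shift[of z y] by (simp add: dist_real_def dist_commute abs_le_iff)
qed simp

lemma farthest_dist_attains_min:
  fixes K :: "'a::heine_borel set"
  assumes "bounded K" and "K \<noteq> {}"
  obtains x where "\<And>y. farthest_dist K x \<le> farthest_dist K y"
proof -
  obtain w where w: "w \<in> K" using assms(2) by blast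
  define B where "B = cball w (farthest_dist K w)"
  have "w \<in> B"
    using dist_le_farthest_dist[OF assms(1) w, of w] by (simp add: B_def)
  have "compact B" and "B \<noteq> {}"
    using \<open>w \<in> B\<close> by (auto simp: B_def)
  moreover have "continuous_on B (farthest_dist K)"
    using lipschitz_on_continuous_on[OF lipschitz_on_farthest_dist[OF assms]]
    by (rule continuous_on_subset) simp
  ultimately obtain x where x: "\<And>y. y \<in> B \<Longrightarrow> farthest_dist K x \<le> farthest_dist K y"
    using continuous_attains_inf[of B "farthest_dist K"] by blast
  have outside: "farthest_dist K w < farthest_dist K y" if "y \<notin> B" for y
    using that dist_le_farthest_dist[OF assms(1) w, of y] by (simp add: B_def dist_commute)
  have "farthest_dist K x \<le> farthest_dist K y" for y
  proof (cases "y \<in> B")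
    case False
    then show ?thesis using x[OF \<open>w \<in> B\<close>] outside[of y] by linarith
  qed (rule x)
  then show ?thesis by (rule that)
qed

lemma cball_radius_nonneg:
  fixes K :: "'a::metric_space set"
  assumes "K \<subseteq> cball x R" and "K \<noteq> {}"
  shows "0 \<le> R"
proof -
  obtain w where "w \<in> K" using assms(2) by blast
  then have "dist x w \<le> R" using assms(1) by auto
  then show ?thesis using zero_le_dist[of x w] by linarith
qed

lemma Outrad_le:
  fixes K :: "'a::euclidean_space set"
  assumes "K \<noteq> {}" and "K \<subseteq> cball y R"
  shows "Outrad K \<le> R"
proof -
  have "bdd_below {R. \<exists>x. K \<subseteq> cball x R}"
    using cball_radius_nonneg[OF _ assms(1)] by (intro bdd_belowI[of _ 0]) blast
  then show ?thesis
    unfolding Outrad_def using assms(2) by (intro cInf_lower) auto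
qed

lemma Outrad_attained:
  fixes K :: "'a::euclidean_space set"
  assumes "bounded K" and "K \<noteq> {}"
  obtains x where "K \<subseteq> cball x (Outrad K)"
proof -
  obtain x where x: "\<And>y. farthest_dist K x \<le> farthest_dist K y"
    using farthest_dist_attains_min[OF assms] by blast
  have "Outrad K = farthest_dist K x"
    unfolding Outrad_def
  proof (rule cInf_eq_minimum)
    show "farthest_dist K x \<in> {R. \<exists>x. K \<subseteq> cball x R}"
      using farthest_dist_le_iff[OF assms, of x "farthest_dist K x"] by auto
    show "farthest_dist K x \<le> R" if R: "R \<in> {R. \<exists>x. K \<subseteq> cball x R}" for R
    proof -
      obtain y where "K \<subseteq> cball y R" using R by auto
      then have "farthest_dist K y \<le> R" using farthest_dist_le_iff[OF assms] by simp
      then show ?thesis using x[of y] by linarith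
    qed
  qed
  then show ?thesis
    using that[of x] farthest_dist_le_iff[OF assms, of x "Outrad K"] by simp
qed

lemma dist_midpoint_squared:
  fixes w y z :: "'a::real_inner"
  shows "(dist w (midpoint y z))\<^sup>2 = ((dist w y)\<^sup>2 + (dist w z)\<^sup>2) / 2 - (dist y z)\<^sup>2 / 4"
  unfolding dist_norm midpoint_def power2_norm_eq_inner
  by (simp add: inner_commute algebra_simps) (simp add: field_simps)

lemma cball_midpoint_shrink:
  fixes K :: "'a::real_inner set"
  assumes "K \<subseteq> cball y R" and "K \<subseteq> cball z R" and "y \<noteq> z" and "K \<noteq> {}"
  obtains R' where "R' < R" and "K \<subseteq> cball (midpoint y z) R'"
proof -
  define R' where "R' = sqrt (R\<^sup>2 - (dist y z)\<^sup>2 / 4)"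
  have "0 \<le> R" using cball_radius_nonneg[OF assms(1,4)] .
  moreover have "R' < sqrt (R\<^sup>2)"
    unfolding R'_def using assms(3) by (intro real_sqrt_less_mono) simp
  ultimately have "R' < R" by simp
  moreover have "K \<subseteq> cball (midpoint y z) R'"
  proof
    fix w assume "w \<in> K"
    then have "dist w y \<le> R" and "dist w z \<le> R"
      using assms(1,2) by (auto simp: dist_commute)
    then have "(dist w y)\<^sup>2 \<le> R\<^sup>2" and "(dist w z)\<^sup>2 \<le> R\<^sup>2"
      by (auto intro: power_mono)
    then have "(dist w (midpoint y z))\<^sup>2 \<le> R\<^sup>2 - (dist y z)\<^sup>2 / 4"
      unfolding dist_midpoint_squared by (simp add: field_simps)
    then show "w \<in> cball (midpoint y z) R'"
      unfolding R'_def by (simp add: real_le_rsqrt dist_commute)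
  qed
  ultimately show ?thesis
    by (rule that)
qed

lemma Outrad_ball_unique:
  fixes K :: "'a::euclidean_space set"
  assumes "K \<noteq> {}" and "K \<subseteq> cball y (Outrad K)" and "K \<subseteq> cball z (Outrad K)"
  shows "y = z"
proof (rule ccontr)
  assume "y \<noteq> z"
  then obtain R' where "R' < Outrad K" and "K \<subseteq> cball (midpoint y z) R'"
    using cball_midpoint_shrink[OF assms(2,3) _ assms(1)] by blast
  then show False
    using Outrad_le[OF assms(1)] by fastforce
qed

lemma cball_subset_cdual_iff:
  fixes K :: "'a::euclidean_space set"
  assumes "0 \<le> r"
  shows "cball y r \<subseteq> cdual K \<longleftrightarrow> K \<subseteq> cball y (1 - r)"
proof -
  have "cball y r \<subseteq> cdual K \<longleftrightarrow> (\<forall>w\<in>K. dist y w + r \<le> 1)"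
    unfolding cdual_def le_INF_iff cball_subset_cball_iff using assms by auto
  also have "\<dots> \<longleftrightarrow> K \<subseteq> cball y (1 - r)"
    by (auto simp: subset_iff)
  finally show ?thesis .
qed

lemma Inrad_cdual:
  fixes K :: "'a::euclidean_space set"
  assumes "K \<noteq> {}" and "K \<subseteq> cball a 1"
  shows "Inrad (cdual K) = 1 - Outrad K"
  unfolding Inrad_def
proof (rule cSup_eq_maximum)
  have "Outrad K \<le> 1" using Outrad_le[OF assms] .
  moreover obtain x where "K \<subseteq> cball x (Outrad K)"
    using Outrad_attained[OF bounded_subset[OF bounded_cball assms(2)] assms(1)] .
  ultimately show "1 - Outrad K \<in> {r. \<exists>x. cball x r \<subseteq> cdual K}"
    using cball_subset_cdual_iff[of "1 - Outrad K" x K] by auto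
next
  fix r assume "r \<in> {r. \<exists>x. cball x r \<subseteq> cdual K}"
  then obtain y where y: "cball y r \<subseteq> cdual K" by blast
  show "r \<le> 1 - Outrad K"
  proof (cases "0 \<le> r")
    case True
    then show ?thesis
      using y cball_subset_cdual_iff[OF True] Outrad_le[OF assms(1)] by fastforce
  next
    case False
    then show ?thesis using Outrad_le[OF assms] by simp
  qed
qed

lemma S_class_subset_unit_cball:
  fixes K :: "'a::euclidean_space set"
  assumes "K \<in> S_class" and "K \<noteq> UNIV"
  obtains a where "K \<subseteq> cball a 1"
proof -
  obtain A where "K = cdual A" using assms(1) by (auto simp: S_class_def)
  moreover from this obtain a where "a \<in> A"
    using assms(2) by (auto simp: cdual_def)
  ultimately show ?thesis
    using that by (auto simp: cdual_def)
qed

theorem lemma3p2: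
  fixes K :: "'a::euclidean_space set"
  assumes "K \<in> S_class" and "K \<noteq> {}" and "K \<noteq> UNIV"
  shows "Outrad K + Inrad (cdual K) = 1 \<and>
         (\<exists>x. (\<forall>y. K \<subseteq> cball y (Outrad K) \<longleftrightarrow> y = x) \<and>
              (\<forall>y. cball y (Inrad (cdual K)) \<subseteq> cdual K \<longleftrightarrow> y = x))"
proof -
  obtain a where a: "K \<subseteq> cball a 1"
    using S_class_subset_unit_cball[OF assms(1,3)] .
  have Inrad_eq: "Inrad (cdual K) = 1 - Outrad K"
    using Inrad_cdual[OF assms(2) a] .
  obtain x where x: "K \<subseteq> cball x (Outrad K)"
    using Outrad_attained[OF bounded_subset[OF bounded_cball a] assms(2)] .
  have minimal_ball: "K \<subseteq> cball y (Outrad K) \<longleftrightarrow> y = x" for y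
    using Outrad_ball_unique[OF assms(2) _ x] x by blast
  moreover have "cball y (Inrad (cdual K)) \<subseteq> cdual K \<longleftrightarrow> y = x" for y
    unfolding Inrad_eq using Outrad_le[OF assms(2) a] cball_subset_cdual_iff[of "1 - Outrad K" y K]
      minimal_ball by simp
  ultimately show ?thesis
    using Inrad_eq by auto
qed

end
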